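(* For $n\ge1$ let $Q_n$ be the number of domino tilings of $K_{1,3}\times P_{2n}$, and let $T_n$ be the number of domino tilings of $C_3\times P_{2n}$. For $n\ge0$ let $q_n$ be the number of domino tilings of the graph obtained from $K_{1,3}\times P_{2n+1}$ by deleting two leaf-vertices of the end copy $K_{1,3}\times\{1\}$. Let $t_n$ be the number of domino tilings of the graph obtained from $C_3\times P_{2n+1}$ by deleting one vertex of the end copy $C_3\times\{1\}$. Then $Q_n=T_n$ for all $n\ge1$ and $q_n=t_n$ for all $n\ge0$.
   Context: $H\times K$ denotes the Cartesian product of graphs. $P_m$ is the path with vertex set $\{1,\dots,m\}$. $C_3$ is the triangle and $K_{1,3}$ is the star with one center and three leaves. A domino tiling of a finite graph is a perfect matching, and the number of domino tilings is the number of perfect matchings. *)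

theory Defs
  imports Main
begin

text \<open>A finite simple graph is represented by a vertex set V and a set E of
  2-element subsets of V (undirected edges).\<close>

definition perfect_matching :: "'a set \<Rightarrow> 'a set set \<Rightarrow> 'a set set \<Rightarrow> bool" where
  "perfect_matching V E M \<longleftrightarrow> M \<subseteq> E \<and> (\<forall>v\<in>V. \<exists>!e. e \<in> M \<and> v \<in> e)"

text \<open>Number of domino tilings = number of perfect matchings.\<close>
definition num_tilings :: "'a set \<Rightarrow> 'a set set \<Rightarrow> nat" where
  "num_tilings V E = card {M. perfect_matching V E M}"

definition cart_verts :: "'a set \<Rightarrow> 'b set \<Rightarrow> ('a \<times> 'b) set" where
  "cart_verts V1 V2 = V1 \<times> V2"

definition cart_edges :: "'a set \<Rightarrow> 'a set set \<Rightarrow> 'b set \<Rightarrow> 'b set set \<Rightarrow> ('a \<times> 'b) set set" where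
  "cart_edges V1 E1 V2 E2 =
     {{(u, x), (v, x)} | u v x. {u, v} \<in> E1 \<and> x \<in> V2} \<union>
     {{(u, x), (u, y)} | u x y. u \<in> V1 \<and> {x, y} \<in> E2}"

definition del_edges :: "'a set set \<Rightarrow> 'a set \<Rightarrow> 'a set set" where
  "del_edges E S = {e \<in> E. e \<inter> S = {}}"

definition path_V :: "nat \<Rightarrow> nat set" where "path_V m = {1..m}"
definition path_E :: "nat \<Rightarrow> nat set set" where
  "path_E m = {{i, Suc i} | i. 1 \<le> i \<and> Suc i \<le> m}"

definition star_V :: "nat set" where "star_V = {0,1,2,3}"
definition star_E :: "nat set set" where "star_E = {{0,1},{0,2},{0,3}}"

definition tri_V :: "nat set" where "tri_V = {0,1,2}"
definition tri_E :: "nat set set" where "tri_E = {{0,1},{1,2},{0,2}}"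

definition Q :: "nat \<Rightarrow> nat" where
  "Q n = num_tilings (cart_verts star_V (path_V (2*n))) (cart_edges star_V star_E (path_V (2*n)) (path_E (2*n)))"

definition T :: "nat \<Rightarrow> nat" where
  "T n = num_tilings (cart_verts tri_V (path_V (2*n))) (cart_edges tri_V tri_E (path_V (2*n)) (path_E (2*n)))"

definition q :: "nat \<Rightarrow> nat \<Rightarrow> nat \<Rightarrow> nat" where
  "q a b n = (let m = 2*n+1; S = {(a,1),(b,1)} in
     num_tilings (cart_verts star_V (path_V m) - S)
                 (del_edges (cart_edges star_V star_E (path_V m) (path_E m)) S))"

definition t :: "nat \<Rightarrow> nat \<Rightarrow> nat" where
  "t v n = (let m = 2*n+1; S = {(v,1)} in
     num_tilings (cart_verts tri_V (path_V m) - S)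
                 (del_edges (cart_edges tri_V tri_E (path_V m) (path_E m)) S))"

end

theory Submission
  imports Defs
begin

lemma perfect_matching_subset: "perfect_matching V E M \<Longrightarrow> M \<subseteq> E"
  unfolding perfect_matching_def by blast

lemma perfect_matching_unique_edge:
  "perfect_matching V E M \<Longrightarrow> e \<in> M \<Longrightarrow> f \<in> M \<Longrightarrow> x \<in> e \<Longrightarrow> x \<in> f \<Longrightarrow> x \<in> V \<Longrightarrow> e = f"
  unfolding perfect_matching_def by blast

lemma perfect_matching_restrict:
  assumes M: "perfect_matching (V1 \<union> V2) (E1 \<union> E2) M" and disj: "V1 \<inter> V2 = {}"
    and E2: "\<And>e. e \<in> E2 \<Longrightarrow> e \<subseteq> V2"
  shows "perfect_matching V1 E1 (M \<inter> E1)"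
proof -
  have "\<exists>!e. e \<in> M \<inter> E1 \<and> v \<in> e" if "v \<in> V1" for v
  proof -
    obtain e where e: "e \<in> M" "v \<in> e" and unique: "\<And>e'. e' \<in> M \<Longrightarrow> v \<in> e' \<Longrightarrow> e' = e"
      using M \<open>v \<in> V1\<close> unfolding perfect_matching_def by blast
    have "e \<notin> E2"
      using E2 disj \<open>v \<in> V1\<close> e by blast
    then have "e \<in> E1"
      using e perfect_matching_subset[OF M] by blast
    then show ?thesis
      using e unique by blast
  qed
  then show ?thesis
    unfolding perfect_matching_def by blast
qed

lemma perfect_matching_disjoint_Un:
  assumes M1: "perfect_matching V1 E1 M1" and M2: "perfect_matching V2 E2 M2"
    and disj: "V1 \<inter> V2 = {}"
    and E1: "\<And>e. e \<in> E1 \<Longrightarrow> e \<subseteq> V1" and E2: "\<And>e. e \<in> E2 \<Longrightarrow> e \<subseteq> V2"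
  shows "perfect_matching (V1 \<union> V2) (E1 \<union> E2) (M1 \<union> M2)"
proof -
  have "\<exists>!e. e \<in> M1 \<union> M2 \<and> v \<in> e" if "v \<in> V1" for v
  proof -
    have "v \<notin> e" if "e \<in> M2" for e
      using that perfect_matching_subset[OF M2] E2 disj \<open>v \<in> V1\<close> by blast
    then show ?thesis
      using M1 \<open>v \<in> V1\<close> unfolding perfect_matching_def by blast
  qed
  moreover have "\<exists>!e. e \<in> M1 \<union> M2 \<and> v \<in> e" if "v \<in> V2" for v
  proof -
    have "v \<notin> e" if "e \<in> M1" for e
      using that perfect_matching_subset[OF M1] E1 disj \<open>v \<in> V2\<close> by blast
    then show ?thesis
      using M2 \<open>v \<in> V2\<close> unfolding perfect_matching_def by blast
  qed
  ultimately show ?thesis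
    using perfect_matching_subset[OF M1] perfect_matching_subset[OF M2]
    unfolding perfect_matching_def by blast
qed

lemma num_tilings_disjoint_Un:
  assumes disj: "V1 \<inter> V2 = {}"
    and E1: "\<And>e. e \<in> E1 \<Longrightarrow> e \<subseteq> V1 \<and> e \<noteq> {}"
    and E2: "\<And>e. e \<in> E2 \<Longrightarrow> e \<subseteq> V2 \<and> e \<noteq> {}"
  shows "num_tilings (V1 \<union> V2) (E1 \<union> E2) = num_tilings V1 E1 * num_tilings V2 E2"
proof -
  have "E1 \<inter> E2 = {}"
    using disj E1 E2 by blast
  have parts: "(M1 \<union> M2) \<inter> E1 = M1" "(M1 \<union> M2) \<inter> E2 = M2"
    if "perfect_matching V1 E1 M1" "perfect_matching V2 E2 M2" for M1 M2
    using perfect_matching_subset[OF that(1)] perfect_matching_subset[OF that(2)] \<open>E1 \<inter> E2 = {}\<close>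
    by blast+
  have restrict1: "perfect_matching V1 E1 (M \<inter> E1)"
    and restrict2: "perfect_matching V2 E2 (M \<inter> E2)"
    and split: "M = (M \<inter> E1) \<union> (M \<inter> E2)"
    if "perfect_matching (V1 \<union> V2) (E1 \<union> E2) M" for M
  proof -
    show "perfect_matching V1 E1 (M \<inter> E1)"
      using perfect_matching_restrict[OF that disj] E2 by blast
    show "perfect_matching V2 E2 (M \<inter> E2)"
      using perfect_matching_restrict[of V2 V1 E2 E1 M] that disj E1
      by (simp add: Un_commute inf_commute)
    show "M = (M \<inter> E1) \<union> (M \<inter> E2)"
      using that by (auto simp: perfect_matching_def)
  qed
  have "bij_betw (\<lambda>(M1, M2). M1 \<union> M2)
      ({M. perfect_matching V1 E1 M} \<times> {M. perfect_matching V2 E2 M})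
      {M. perfect_matching (V1 \<union> V2) (E1 \<union> E2) M}"
    by (rule bij_betw_byWitness[where f'="\<lambda>M. (M \<inter> E1, M \<inter> E2)"])
      (use parts restrict1 restrict2 split perfect_matching_disjoint_Un[OF _ _ disj] E1 E2 in auto)
  then show ?thesis
    unfolding num_tilings_def by (metis bij_betw_same_card card_cartesian_product)
qed

lemma perfect_matching_remove_fixed:
  assumes M: "perfect_matching V E M" and MC: "M \<inter> C = F" and EV: "\<And>e. e \<in> E \<Longrightarrow> e \<subseteq> V"
  shows "perfect_matching (V - \<Union>F) {e \<in> E - C. e \<subseteq> V - \<Union>F} (M - F)"
proof -
  have ME: "M \<subseteq> E"
    using M by (rule perfect_matching_subset)
  have cover: "\<And>v. v \<in> V \<Longrightarrow> \<exists>!e. e \<in> M \<and> v \<in> e"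
    using M unfolding perfect_matching_def by blast
  have avoid: "e \<subseteq> V - \<Union>F" if "e \<in> M - F" for e
  proof
    fix x assume "x \<in> e"
    have "x \<in> V"
      using \<open>x \<in> e\<close> that ME EV by blast
    moreover have "x \<notin> f" if "f \<in> F" for f
      using cover[OF \<open>x \<in> V\<close>] \<open>x \<in> e\<close> \<open>e \<in> M - F\<close> \<open>f \<in> F\<close> MC by blast
    ultimately show "x \<in> V - \<Union>F"
      by blast
  qed
  have "M - F \<subseteq> {e \<in> E - C. e \<subseteq> V - \<Union>F}"
    using avoid ME MC by blast
  moreover have "\<forall>v \<in> V - \<Union>F. \<exists>!e. e \<in> M - F \<and> v \<in> e"
    using cover by blast
  ultimately show ?thesis
    unfolding perfect_matching_def by (rule conjI)
qed

lemma perfect_matching_add_fixed: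
  assumes M': "perfect_matching (V - \<Union>F) {e \<in> E - C. e \<subseteq> V - \<Union>F} M'"
    and FC: "F \<subseteq> C" and CE: "C \<subseteq> E" and disjF: "pairwise disjnt F"
  shows "perfect_matching V E (F \<union> M')" and "(F \<union> M') \<inter> C = F"
proof -
  have M'E: "M' \<subseteq> {e \<in> E - C. e \<subseteq> V - \<Union>F}"
    using M' by (rule perfect_matching_subset)
  have "\<exists>!e. e \<in> F \<union> M' \<and> v \<in> e" if "v \<in> V" for v
  proof (cases "v \<in> \<Union>F")
    case True
    then obtain f where f: "f \<in> F" "v \<in> f"
      by blast
    have "e = f" if "e \<in> F \<union> M'" "v \<in> e" for e
    proof (cases "e \<in> F")
      case True
      then show ?thesis
        using disjF f \<open>v \<in> e\<close> unfolding pairwise_def disjnt_def by blast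
    next
      case False
      then show ?thesis
        using M'E \<open>e \<in> F \<union> M'\<close> \<open>v \<in> e\<close> f by blast
    qed
    then show ?thesis
      using f by blast
  next
    case False
    then have "\<exists>!e. e \<in> M' \<and> v \<in> e"
      using M' \<open>v \<in> V\<close> unfolding perfect_matching_def by blast
    then show ?thesis
      using False by blast
  qed
  moreover have "F \<union> M' \<subseteq> E"
    using FC CE M'E by blast
  ultimately show "perfect_matching V E (F \<union> M')"
    unfolding perfect_matching_def by blast
  show "(F \<union> M') \<inter> C = F"
    using FC M'E by blast
qed

lemma card_perfect_matchings_fix_edges:
  assumes FC: "F \<subseteq> C" and CE: "C \<subseteq> E" and EV: "\<And>e. e \<in> E \<Longrightarrow> e \<subseteq> V" and disjF: "pairwise disjnt F"
  shows "card {M. perfect_matching V E M \<and> M \<inter> C = F} =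
    num_tilings (V - \<Union>F) {e \<in> E - C. e \<subseteq> V - \<Union>F}"
proof -
  let ?E' = "{e \<in> E - C. e \<subseteq> V - \<Union>F}"
  have "bij_betw (\<lambda>M. M - F) {M. perfect_matching V E M \<and> M \<inter> C = F} {M. perfect_matching (V - \<Union>F) ?E' M}"
  proof (rule bij_betw_byWitness[where f'="\<lambda>M'. F \<union> M'"])
    show "\<forall>M \<in> {M. perfect_matching V E M \<and> M \<inter> C = F}. F \<union> (M - F) = M"
      by blast
    show "\<forall>M' \<in> {M. perfect_matching (V - \<Union>F) ?E' M}. F \<union> M' - F = M'"
      using perfect_matching_subset FC by blast
    show "(\<lambda>M. M - F) ` {M. perfect_matching V E M \<and> M \<inter> C = F} \<subseteq> {M. perfect_matching (V - \<Union>F) ?E' M}"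
      using perfect_matching_remove_fixed EV by blast
    show "(\<lambda>M'. F \<union> M') ` {M. perfect_matching (V - \<Union>F) ?E' M} \<subseteq> {M. perfect_matching V E M \<and> M \<inter> C = F}"
      using perfect_matching_add_fixed[OF _ FC CE disjF] by blast
  qed
  then show ?thesis
    unfolding num_tilings_def by (rule bij_betw_same_card)
qed

lemma ex1_image_iff:
  assumes g: "inj_on g X" and PR: "\<And>y. y \<in> X \<Longrightarrow> P (g y) \<longleftrightarrow> R y"
  shows "(\<exists>!z. z \<in> g ` X \<and> P z) \<longleftrightarrow> (\<exists>!y. y \<in> X \<and> R y)"
proof
  assume "\<exists>!z. z \<in> g ` X \<and> P z"
  then obtain y where y: "y \<in> X" "P (g y)" and unique: "\<And>z. z \<in> g ` X \<Longrightarrow> P z \<Longrightarrow> z = g y"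
    by blast
  show "\<exists>!y. y \<in> X \<and> R y"
  proof (rule ex1I[of _ y])
    show "y \<in> X \<and> R y"
      using y PR by blast
    show "y' = y" if "y' \<in> X \<and> R y'" for y'
      using that unique[of "g y'"] PR inj_onD[OF g] y(1) by blast
  qed
next
  assume "\<exists>!y. y \<in> X \<and> R y"
  then obtain y where y: "y \<in> X" "R y" and unique: "\<And>y'. y' \<in> X \<Longrightarrow> R y' \<Longrightarrow> y' = y"
    by blast
  show "\<exists>!z. z \<in> g ` X \<and> P z"
  proof (rule ex1I[of _ "g y"])
    show "g y \<in> g ` X \<and> P (g y)"
      using y PR by blast
    show "z = g y" if "z \<in> g ` X \<and> P z" for z
      using that unique PR by blast
  qed
qed

lemma perfect_matching_image_iff:
  assumes f: "inj_on f V" and EV: "\<And>e. e \<in> E \<Longrightarrow> e \<subseteq> V" and ME: "M \<subseteq> E"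
  shows "perfect_matching (f ` V) ((`) f ` E) ((`) f ` M) \<longleftrightarrow> perfect_matching V E M"
proof -
  have inj: "inj_on ((`) f) M"
    using ME EV by (intro inj_on_subset[OF inj_on_image_Pow[OF f]]) auto
  have "(\<exists>!e'. e' \<in> (`) f ` M \<and> f v \<in> e') \<longleftrightarrow> (\<exists>!e. e \<in> M \<and> v \<in> e)" if "v \<in> V" for v
    using that ME EV by (intro ex1_image_iff[OF inj] inj_on_image_mem_iff[OF f]) auto
  then show ?thesis
    using ME unfolding perfect_matching_def by (simp add: image_mono)
qed

lemma num_tilings_image:
  assumes f: "inj_on f V" and EV: "\<And>e. e \<in> E \<Longrightarrow> e \<subseteq> V"
  shows "num_tilings (f ` V) ((`) f ` E) = num_tilings V E"
proof -
  have "inj_on ((`) ((`) f)) (Pow (Pow V))"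
    using inj_on_image_Pow[OF inj_on_image_Pow[OF f]] .
  moreover have "{M. perfect_matching V E M} \<subseteq> Pow (Pow V)"
    using perfect_matching_subset EV by blast
  ultimately have "inj_on ((`) ((`) f)) {M. perfect_matching V E M}"
    by (rule inj_on_subset)
  moreover have "(`) ((`) f) ` {M. perfect_matching V E M} = {M. perfect_matching (f ` V) ((`) f ` E) M}"
  proof (intro equalityI subsetI)
    fix M' assume "M' \<in> {M. perfect_matching (f ` V) ((`) f ` E) M}"
    then have M': "perfect_matching (f ` V) ((`) f ` E) M'"
      by simp
    obtain M where "M \<subseteq> E" "M' = (`) f ` M"
      using perfect_matching_subset[OF M'] by (auto simp: subset_image_iff)
    then show "M' \<in> (`) ((`) f) ` {M. perfect_matching V E M}"
      using perfect_matching_image_iff[OF f EV] M' by blast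
  next
    fix M' assume "M' \<in> (`) ((`) f) ` {M. perfect_matching V E M}"
    then obtain M where "perfect_matching V E M" "M' = (`) f ` M"
      by blast
    then show "M' \<in> {M. perfect_matching (f ` V) ((`) f ` E) M}"
      using perfect_matching_image_iff[OF f EV perfect_matching_subset] by blast
  qed
  ultimately show ?thesis
    unfolding num_tilings_def by (metis card_image)
qed

lemma perfect_matching_intersecting_edges:
  assumes M: "perfect_matching V E M" and EV: "\<And>e. e \<in> E \<Longrightarrow> e \<subseteq> V"
    and meet: "\<And>e f. e \<in> E \<Longrightarrow> f \<in> E \<Longrightarrow> e \<inter> f \<noteq> {}"
    and "e \<in> M"
  shows "e = V"
proof (rule ccontr)
  have "e \<in> E"
    using \<open>e \<in> M\<close> perfect_matching_subset[OF M] by blast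
  then have "e \<subseteq> V"
    by (rule EV)
  moreover assume "e \<noteq> V"
  ultimately obtain v where "v \<in> V" "v \<notin> e"
    by blast
  then obtain f where "f \<in> M" "v \<in> f"
    using M unfolding perfect_matching_def by blast
  then have "f \<in> E"
    using perfect_matching_subset[OF M] by blast
  with \<open>e \<in> E\<close> obtain x where "x \<in> e" "x \<in> f"
    using meet by blast
  then have "e = f"
    using perfect_matching_unique_edge[OF M \<open>e \<in> M\<close> \<open>f \<in> M\<close>] \<open>e \<subseteq> V\<close> by blast
  then show False
    using \<open>v \<in> f\<close> \<open>v \<notin> e\<close> by blast
qed

lemma perfect_matching_intersecting_iff:
  assumes nonempty: "\<And>e. e \<in> E \<Longrightarrow> e \<noteq> {}"
    and meet: "\<And>e f. e \<in> E \<Longrightarrow> f \<in> E \<Longrightarrow> e \<inter> f \<noteq> {}"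
  shows "perfect_matching V {e \<in> E. e \<subseteq> V} M \<longleftrightarrow> (V = {} \<and> M = {}) \<or> (V \<in> E \<and> M = {V})"
proof
  assume M: "perfect_matching V {e \<in> E. e \<subseteq> V} M"
  have "M \<subseteq> {V}"
    using perfect_matching_intersecting_edges[OF M] meet by blast
  moreover have "M \<subseteq> E"
    using perfect_matching_subset[OF M] by blast
  moreover have "M \<noteq> {}" if "V \<noteq> {}"
    using M that unfolding perfect_matching_def by blast
  ultimately show "(V = {} \<and> M = {}) \<or> (V \<in> E \<and> M = {V})"
    by blast
next
  assume "(V = {} \<and> M = {}) \<or> (V \<in> E \<and> M = {V})"
  then show "perfect_matching V {e \<in> E. e \<subseteq> V} M"
    unfolding perfect_matching_def by auto
qed

lemma num_tilings_intersecting: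
  assumes "\<And>e. e \<in> E \<Longrightarrow> e \<noteq> {}" "\<And>e f. e \<in> E \<Longrightarrow> f \<in> E \<Longrightarrow> e \<inter> f \<noteq> {}"
  shows "num_tilings V {e \<in> E. e \<subseteq> V} = (if V = {} \<or> V \<in> E then 1 else 0)"
proof -
  have "{M. perfect_matching V {e \<in> E. e \<subseteq> V} M} = (if V = {} then {{}} else if V \<in> E then {{V}} else {})"
    using perfect_matching_intersecting_iff[OF assms] assms(1) by auto
  then show ?thesis
    unfolding num_tilings_def by simp
qed

lemma cart_edges_path_iff:
  "e \<in> cart_edges W EH (path_V m) (path_E m) \<longleftrightarrow>
    (\<exists>u v i. e = {(u, i), (v, i)} \<and> {u, v} \<in> EH \<and> 1 \<le> i \<and> i \<le> m) \<or>
    (\<exists>u i. e = {(u, i), (u, Suc i)} \<and> u \<in> W \<and> 1 \<le> i \<and> Suc i \<le> m)"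
  unfolding cart_edges_def path_V_def path_E_def
  by (auto simp: doubleton_eq_iff) (metis insert_commute)+

lemma cart_edges_path_layer:
  "e \<in> cart_edges W EH (path_V m) (path_E m) \<Longrightarrow> x \<in> e \<Longrightarrow> 1 \<le> snd x \<and> snd x \<le> m"
  unfolding cart_edges_path_iff by auto

definition rung :: "'a \<Rightarrow> nat \<Rightarrow> ('a \<times> nat) set" where
  "rung u m = {(u, m), (u, Suc m)}"

lemma inj_rung: "inj (\<lambda>u. rung u m)"
  by (auto simp: inj_def rung_def doubleton_eq_iff)

locale graph_prism =
  fixes W :: "'a set" and EH :: "'a set set" and D :: "('a \<times> nat) set"
  assumes finite_W: "finite W"
    and edge_card: "\<And>e. e \<in> EH \<Longrightarrow> e \<subseteq> W \<and> card e = 2"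
begin

definition verts :: "nat \<Rightarrow> 'a set \<Rightarrow> ('a \<times> nat) set" where
  "verts m A = {(u, i). u \<in> W \<and> 1 \<le> i \<and> i \<le> m \<and> (u, i) \<notin> D \<and> \<not> (i = m \<and> u \<in> A)}"

definition edges :: "nat \<Rightarrow> 'a set \<Rightarrow> ('a \<times> nat) set set" where
  "edges m A = {e \<in> cart_edges W EH (path_V m) (path_E m). e \<subseteq> verts m A}"

definition layer :: "nat \<Rightarrow> 'a set" where
  "layer m = {u \<in> W. 1 \<le> m \<and> (u, m) \<notin> D}"

definition rung_edges :: "nat \<Rightarrow> 'a set \<Rightarrow> ('a \<times> nat) set set" where
  "rung_edges m A = {e \<in> edges (Suc m) A. \<exists>u. e = rung u m}"

definition tilings :: "nat \<Rightarrow> 'a set \<Rightarrow> nat" where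
  "tilings m A = (if A \<subseteq> layer m then num_tilings (verts m A) (edges m A) else 0)"

lemma mem_verts [simp]:
  "(u, i) \<in> verts m A \<longleftrightarrow> u \<in> W \<and> 1 \<le> i \<and> i \<le> m \<and> (u, i) \<notin> D \<and> \<not> (i = m \<and> u \<in> A)"
  by (simp add: verts_def)

lemma edge_pair: "e \<in> EH \<Longrightarrow> \<exists>u v. e = {u, v} \<and> u \<noteq> v \<and> u \<in> W \<and> v \<in> W"
  using edge_card by (metis card_2_iff insert_subset)

lemma edge_nonempty: "e \<in> EH \<Longrightarrow> e \<noteq> {}"
  using edge_pair by blast

lemma edge_subset_edge: "e \<in> EH \<Longrightarrow> f \<in> EH \<Longrightarrow> f \<subseteq> e \<Longrightarrow> f = e"
  using edge_card by (metis card.infinite card_subset_eq zero_neq_numeral)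

lemma finite_EH: "finite EH"
  using finite_W edge_card by (rule_tac finite_subset[of _ "Pow W"]) auto

lemma finite_verts: "finite (verts m A)"
proof -
  have "verts m A \<subseteq> W \<times> {..m}"
    by (auto simp: verts_def)
  then show ?thesis
    using finite_W finite_subset by blast
qed

lemma finite_edges: "finite (edges m A)"
  using finite_verts[of m A] by (rule_tac finite_subset[of _ "Pow (verts m A)"]) (auto simp: edges_def)

lemma edges_subset_verts: "e \<in> edges m A \<Longrightarrow> e \<subseteq> verts m A"
  by (simp add: edges_def)

lemma edges_nonempty: "e \<in> edges m A \<Longrightarrow> e \<noteq> {}"
  by (auto simp: edges_def cart_edges_path_iff)

lemma rung_in_edges_iff: "rung u m \<in> edges (Suc m) A \<longleftrightarrow> u \<in> layer (Suc m) - A \<and> u \<in> layer m"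
  by (auto simp: edges_def cart_edges_path_iff rung_def layer_def doubleton_eq_iff)

lemma layer_full: "1 \<le> m \<Longrightarrow> (\<And>u. (u, m) \<notin> D) \<Longrightarrow> layer m = W"
  by (auto simp: layer_def)

lemma layer_one: "layer 1 = W - {u. (u, 1) \<in> D}"
  by (auto simp: layer_def)

lemma cart_edges_Suc_cases:
  assumes "e \<in> cart_edges W EH (path_V (Suc m)) (path_E (Suc m))"
  obtains (top) f where "f \<in> EH" "e = (\<lambda>u. (u, Suc m)) ` f"
    | (rung) u where "e = rung u m"
    | (low) "e \<in> cart_edges W EH (path_V m) (path_E m)"
proof -
  from assms consider (horizontal) u v i where "e = {(u, i), (v, i)}" "{u, v} \<in> EH" "1 \<le> i" "i \<le> Suc m"
    | (vertical) u i where "e = {(u, i), (u, Suc i)}" "u \<in> W" "1 \<le> i" "Suc i \<le> Suc m"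
    unfolding cart_edges_path_iff by blast
  then show ?thesis
  proof cases
    case horizontal
    show ?thesis
    proof (cases "i = Suc m")
      case True
      then show ?thesis
        using horizontal top[of "{u, v}"] by simp
    next
      case False
      then have "i \<le> m"
        using horizontal by simp
      then show ?thesis
        using horizontal low unfolding cart_edges_path_iff by blast
    qed
  next
    case vertical
    show ?thesis
    proof (cases "i = m")
      case True
      then show ?thesis
        using vertical rung by (simp add: rung_def)
    next
      case False
      then have "Suc i \<le> m"
        using vertical by simp
      then show ?thesis
        using vertical low unfolding cart_edges_path_iff by blast
    qed
  qed
qed

lemma verts_Suc_minus_rungs:
  assumes "S \<subseteq> layer (Suc m) - A" "S \<subseteq> layer m"
  shows "verts (Suc m) A - (\<Union>u\<in>S. rung u m) =
    (\<lambda>u. (u, Suc m)) ` (layer (Suc m) - A - S) \<union> verts m S"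
  using assms by (auto simp: rung_def layer_def verts_def image_iff le_Suc_eq)

lemma lifted_edge_in_edges_Suc:
  assumes f: "f \<in> EH" "f \<subseteq> layer (Suc m) - A"
  shows "(\<lambda>u. (u, Suc m)) ` f \<in> edges (Suc m) A - rung_edges m A"
proof -
  obtain u v where uv: "f = {u, v}"
    using edge_pair[OF f(1)] by blast
  have "(\<lambda>u. (u, Suc m)) ` f \<in> cart_edges W EH (path_V (Suc m)) (path_E (Suc m))"
    unfolding cart_edges_path_iff uv using f(1) uv by auto
  moreover have "(\<lambda>u. (u, Suc m)) ` f \<subseteq> verts (Suc m) A"
    using f(2) by (auto simp: layer_def)
  moreover have "(\<lambda>u. (u, Suc m)) ` f \<noteq> rung w m" for w
    using uv by (auto simp: rung_def doubleton_eq_iff)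
  ultimately show ?thesis
    by (auto simp: edges_def rung_edges_def)
qed

lemma edges_in_edges_Suc:
  assumes e: "e \<in> edges m S"
  shows "e \<in> edges (Suc m) A - rung_edges m A"
proof -
  have "e \<in> cart_edges W EH (path_V (Suc m)) (path_E (Suc m))"
    using e unfolding edges_def cart_edges_path_iff by fastforce
  moreover have "x \<in> verts (Suc m) A \<and> snd x \<le> m" if "x \<in> e" for x
    using e that by (cases x) (auto simp: edges_def)
  moreover from this[of "(w, Suc m)" for w] have "e \<noteq> rung w m" for w
    by (auto simp: rung_def)
  ultimately show ?thesis
    by (auto simp: edges_def rung_edges_def)
qed

lemma edges_Suc_minus_rungs:
  "{e \<in> edges (Suc m) A - rung_edges m A.
      e \<subseteq> (\<lambda>u. (u, Suc m)) ` (layer (Suc m) - A - S) \<union> verts m S} =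
    (`) (\<lambda>u. (u, Suc m)) ` {e \<in> EH. e \<subseteq> layer (Suc m) - A - S} \<union> edges m S"
    (is "{e \<in> _ - _. e \<subseteq> ?top \<union> _} = ?lift \<union> _")
proof (intro equalityI subsetI)
  fix e assume "e \<in> {e \<in> edges (Suc m) A - rung_edges m A. e \<subseteq> ?top \<union> verts m S}"
  then have cart: "e \<in> cart_edges W EH (path_V (Suc m)) (path_E (Suc m))"
    and eV: "e \<subseteq> verts (Suc m) A" and not_rung: "e \<notin> rung_edges m A" and top: "e \<subseteq> ?top \<union> verts m S"
    by (auto simp: edges_def)
  from cart show "e \<in> ?lift \<union> edges m S"
  proof (cases rule: cart_edges_Suc_cases)
    case (top f)
    then have "f \<subseteq> layer (Suc m) - A - S"
      using \<open>e \<subseteq> ?top \<union> verts m S\<close> by auto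
    then show ?thesis
      using top by blast
  next
    case (rung u)
    then show ?thesis
      using cart eV not_rung by (auto simp: rung_edges_def edges_def)
  next
    case low
    then have "e \<subseteq> verts m S"
      using top cart_edges_path_layer[OF low] by fastforce
    then show ?thesis
      using low by (simp add: edges_def)
  qed
next
  fix e assume "e \<in> ?lift \<union> edges m S"
  then show "e \<in> {e \<in> edges (Suc m) A - rung_edges m A. e \<subseteq> ?top \<union> verts m S}"
  proof
    assume "e \<in> ?lift"
    then obtain f where "f \<in> EH" "f \<subseteq> layer (Suc m) - A - S" "e = (\<lambda>u. (u, Suc m)) ` f"
      by blast
    then show ?thesis
      using lifted_edge_in_edges_Suc[of f m A] by auto
  next
    assume "e \<in> edges m S"
    then show ?thesis
      using edges_in_edges_Suc[of e m S A] edges_subset_verts[of e m S] by auto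
  qed
qed

lemma num_tilings_eq_sum_rungs:
  "num_tilings (verts (Suc m) A) (edges (Suc m) A) =
    (\<Sum>S\<in>Pow ((layer (Suc m) - A) \<inter> layer m).
      card {M. perfect_matching (verts (Suc m) A) (edges (Suc m) A) M \<and>
        M \<inter> rung_edges m A = (\<lambda>u. rung u m) ` S})"
proof -
  define PM where "PM = {M. perfect_matching (verts (Suc m) A) (edges (Suc m) A) M}"
  define rungs_of where "rungs_of M = {u. rung u m \<in> M}" for M :: "('a \<times> nat) set set"
  have M_edges: "M \<subseteq> edges (Suc m) A" if "M \<in> PM" for M
    using that perfect_matching_subset unfolding PM_def by blast
  have rungs_of_in: "rungs_of M \<in> Pow ((layer (Suc m) - A) \<inter> layer m)" if "M \<in> PM" for M
    using M_edges[OF that] rung_in_edges_iff unfolding rungs_of_def by blast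
  have finite_PM: "finite PM"
    using finite_edges M_edges by (rule_tac finite_subset[of _ "Pow (edges (Suc m) A)"]) auto
  have "finite (Pow ((layer (Suc m) - A) \<inter> layer m))"
    using finite_W by (simp add: layer_def)
  moreover have "rungs_of ` PM \<subseteq> Pow ((layer (Suc m) - A) \<inter> layer m)"
    using rungs_of_in by blast
  ultimately have "card PM = (\<Sum>S\<in>Pow ((layer (Suc m) - A) \<inter> layer m). card {M \<in> PM. rungs_of M = S})"
    unfolding card_eq_sum by (rule sum.group[OF finite_PM, symmetric])
  moreover have "{M \<in> PM. rungs_of M = S} =
      {M. perfect_matching (verts (Suc m) A) (edges (Suc m) A) M \<and> M \<inter> rung_edges m A = (\<lambda>u. rung u m) ` S}"
    for S
  proof -
    have "rungs_of M = S \<longleftrightarrow> M \<inter> rung_edges m A = (\<lambda>u. rung u m) ` S" if "M \<in> PM" for M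
    proof -
      have "M \<inter> rung_edges m A = (\<lambda>u. rung u m) ` rungs_of M"
        using M_edges[OF that] unfolding rung_edges_def rungs_of_def by blast
      then show ?thesis
        using inj_image_eq_iff[OF inj_rung[of m], of "rungs_of M" S] by simp
    qed
    then show ?thesis
      unfolding PM_def by blast
  qed
  ultimately show ?thesis
    unfolding num_tilings_def PM_def[symmetric] by simp
qed

lemma card_perfect_matchings_fixed_rungs:
  assumes S_top: "S \<subseteq> layer (Suc m) - A" and S_layer: "S \<subseteq> layer m"
  shows "card {M. perfect_matching (verts (Suc m) A) (edges (Suc m) A) M \<and>
      M \<inter> rung_edges m A = (\<lambda>u. rung u m) ` S} =
    num_tilings (layer (Suc m) - A - S) {e \<in> EH. e \<subseteq> layer (Suc m) - A - S} *
    num_tilings (verts m S) (edges m S)"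
proof -
  let ?B = "layer (Suc m) - A - S"
  let ?lift = "\<lambda>u. (u, Suc m)"
  have "pairwise disjnt ((\<lambda>u. rung u m) ` S)"
    by (auto simp: pairwise_def disjnt_def rung_def)
  moreover have "(\<lambda>u. rung u m) ` S \<subseteq> rung_edges m A"
    using S_top S_layer rung_in_edges_iff by (auto simp: rung_edges_def)
  ultimately have "card {M. perfect_matching (verts (Suc m) A) (edges (Suc m) A) M \<and>
      M \<inter> rung_edges m A = (\<lambda>u. rung u m) ` S} =
      num_tilings (verts (Suc m) A - (\<Union>u\<in>S. rung u m))
        {e \<in> edges (Suc m) A - rung_edges m A. e \<subseteq> verts (Suc m) A - (\<Union>u\<in>S. rung u m)}"
    using edges_subset_verts by (intro card_perfect_matchings_fix_edges) (auto simp: rung_edges_def)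
  also have "\<dots> = num_tilings (?lift ` ?B \<union> verts m S) ((`) ?lift ` {e \<in> EH. e \<subseteq> ?B} \<union> edges m S)"
    unfolding verts_Suc_minus_rungs[OF S_top S_layer] edges_Suc_minus_rungs ..
  also have "\<dots> = num_tilings (?lift ` ?B) ((`) ?lift ` {e \<in> EH. e \<subseteq> ?B}) * num_tilings (verts m S) (edges m S)"
    by (rule num_tilings_disjoint_Un) (use edges_subset_verts edges_nonempty edge_nonempty in fastforce)+
  also have "num_tilings (?lift ` ?B) ((`) ?lift ` {e \<in> EH. e \<subseteq> ?B}) = num_tilings ?B {e \<in> EH. e \<subseteq> ?B}"
    by (rule num_tilings_image) (auto simp: inj_on_def)
  finally show ?thesis .
qed

lemma num_tilings_Suc:
  "num_tilings (verts (Suc m) A) (edges (Suc m) A) =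
    (\<Sum>S\<in>Pow (layer (Suc m) - A).
      num_tilings (layer (Suc m) - A - S) {e \<in> EH. e \<subseteq> layer (Suc m) - A - S} * tilings m S)"
proof -
  have "num_tilings (verts (Suc m) A) (edges (Suc m) A) =
      (\<Sum>S\<in>Pow ((layer (Suc m) - A) \<inter> layer m).
        num_tilings (layer (Suc m) - A - S) {e \<in> EH. e \<subseteq> layer (Suc m) - A - S} * tilings m S)"
    unfolding num_tilings_eq_sum_rungs
    by (rule sum.cong[OF refl]) (simp add: card_perfect_matchings_fixed_rungs tilings_def)
  also have "\<dots> = (\<Sum>S\<in>Pow (layer (Suc m) - A).
      num_tilings (layer (Suc m) - A - S) {e \<in> EH. e \<subseteq> layer (Suc m) - A - S} * tilings m S)"
    by (rule sum.mono_neutral_cong_left) (use finite_W in \<open>auto simp: layer_def tilings_def\<close>)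
  finally show ?thesis .
qed

lemma tilings_0: "tilings 0 A = (if A = {} then 1 else 0)"
proof -
  have "verts 0 {} = {}" "edges 0 {} = {}"
    using edges_subset_verts edges_nonempty by (auto simp: verts_def) blast
  then show ?thesis
    by (simp add: tilings_def layer_def num_tilings_def perfect_matching_def)
qed

lemma num_tilings_prism:
  "num_tilings (cart_verts W (path_V m) - D) (del_edges (cart_edges W EH (path_V m) (path_E m)) D) =
    tilings m {}"
proof -
  have V: "verts m {} = cart_verts W (path_V m) - D"
    by (auto simp: verts_def cart_verts_def path_V_def)
  have "e \<subseteq> cart_verts W (path_V m)" if "e \<in> cart_edges W EH (path_V m) (path_E m)" for e
  proof -
    from that consider (horizontal) u v i where "e = {(u, i), (v, i)}" "{u, v} \<in> EH" "1 \<le> i" "i \<le> m"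
      | (vertical) u i where "e = {(u, i), (u, Suc i)}" "u \<in> W" "1 \<le> i" "Suc i \<le> m"
      unfolding cart_edges_path_iff by blast
    then show ?thesis
    proof cases
      case horizontal
      then show ?thesis
        using edge_card[OF horizontal(2)] by (auto simp: cart_verts_def path_V_def)
    qed (auto simp: cart_verts_def path_V_def)
  qed
  then have "edges m {} = del_edges (cart_edges W EH (path_V m) (path_E m)) D"
    unfolding edges_def del_edges_def V by blast
  then show ?thesis
    using V by (simp add: tilings_def)
qed

end

definition transfer :: "nat \<Rightarrow> nat \<times> nat \<Rightarrow> nat \<times> nat" where
  "transfer c = (\<lambda>(x, y). ((c + 1) * x + y, c * x + y))"

locale intersecting_prism = graph_prism +
  assumes edges_meet: "\<And>e f. e \<in> EH \<Longrightarrow> f \<in> EH \<Longrightarrow> e \<inter> f \<noteq> {}"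
begin

lemma tilings_Suc:
  assumes "A \<subseteq> layer (Suc m)"
  defines "B \<equiv> layer (Suc m) - A"
  shows "tilings (Suc m) A = tilings m B + (\<Sum>e\<in>{e \<in> EH. e \<subseteq> B}. tilings m (B - e))"
proof -
  have fin: "finite B"
    using finite_W by (simp add: B_def layer_def)
  have top: "num_tilings (B - S) {e \<in> EH. e \<subseteq> B - S} = (if B - S = {} \<or> B - S \<in> EH then 1 else 0)" for S
    by (rule num_tilings_intersecting[OF edge_nonempty edges_meet])
  have "tilings (Suc m) A = (\<Sum>S\<in>Pow B. (if B - S = {} \<or> B - S \<in> EH then 1 else 0) * tilings m S)"
    using assms(1) unfolding tilings_def[of "Suc m" A] num_tilings_Suc B_def[symmetric] top by simp
  also have "\<dots> = (\<Sum>Y\<in>Pow B. (if Y = {} \<or> Y \<in> EH then 1 else 0) * tilings m (B - Y))"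
    by (rule sum.reindex_bij_witness[where i="\<lambda>Y. B - Y" and j="\<lambda>S. B - S"]) (auto simp: double_diff)
  also have "\<dots> = (\<Sum>Y\<in>insert {} {e \<in> EH. e \<subseteq> B}. tilings m (B - Y))"
    by (rule sum.mono_neutral_cong_right) (use fin in auto)
  also have "\<dots> = tilings m B + (\<Sum>e\<in>{e \<in> EH. e \<subseteq> B}. tilings m (B - e))"
    using finite_EH edge_nonempty by (subst sum.insert) auto
  finally show ?thesis .
qed

definition tiling_vector :: "nat \<Rightarrow> nat \<times> nat" where
  "tiling_vector m = (tilings m {}, \<Sum>e\<in>EH. tilings m e)"

lemma edges_below_edge: "e \<in> EH \<Longrightarrow> {f \<in> EH. f \<subseteq> e} = {e}"
  using edge_subset_edge by blast

lemma edges_below_complement: "e \<in> EH \<Longrightarrow> {f \<in> EH. f \<subseteq> W - e} = {}"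
  using edges_meet by blast

lemma edges_below_empty: "{f \<in> EH. f \<subseteq> {}} = {}"
  using edge_nonempty by blast

lemma tiling_vector_Suc_Suc:
  assumes full: "layer (Suc m) = W" "layer (Suc (Suc m)) = W"
  shows "tiling_vector (Suc (Suc m)) = transfer (card EH) (tiling_vector m)"
proof -
  have edge_W: "e \<subseteq> W" if "e \<in> EH" for e
    using edge_card that by blast
  have "tilings (Suc (Suc m)) {} = tilings (Suc m) W + (\<Sum>e\<in>EH. tilings (Suc m) (W - e))"
  proof -
    have "{e \<in> EH. e \<subseteq> W} = EH"
      using edge_W by blast
    then show ?thesis
      using tilings_Suc[of "{}" "Suc m"] full by simp
  qed
  moreover have "tilings (Suc m) W = tilings m {}"
    using tilings_Suc[of W m] full edges_below_empty by simp
  moreover have "tilings (Suc m) (W - e) = tilings m e + tilings m {}" if "e \<in> EH" for e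
    using tilings_Suc[of "W - e" m] full edges_below_edge[OF that] edge_W[OF that]
    by (simp add: double_diff)
  moreover have "tilings (Suc (Suc m)) e = tilings (Suc m) (W - e)" if "e \<in> EH" for e
    using tilings_Suc[of e "Suc m"] full edges_below_complement[OF that] edge_W[OF that] by simp
  ultimately show ?thesis
    by (simp add: tiling_vector_def transfer_def sum.distrib)
qed

lemma tiling_vector_0: "tiling_vector 0 = (1, 0)"
  using edge_nonempty by (simp add: tiling_vector_def tilings_0)

lemma tiling_vector_1:
  assumes L: "layer 1 \<in> EH"
  shows "tiling_vector 1 = (1, 1)"
proof -
  have "tilings 1 e = (if e = layer 1 then 1 else 0)" if "e \<in> EH" for e
  proof (cases "e \<subseteq> layer 1")
    case True
    then have "e = layer 1"
      using edge_subset_edge[OF L that] by blast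
    then show ?thesis
      using tilings_Suc[of e 0] edges_below_empty by (simp add: tilings_0)
  qed (simp add: tilings_def)
  then have "(\<Sum>e\<in>EH. tilings 1 e) = 1"
    using finite_EH L by simp
  moreover have "tilings 1 {} = 1"
    using tilings_Suc[of "{}" 0] edges_below_edge[OF L] L edge_nonempty by (simp add: tilings_0)
  ultimately show ?thesis
    by (simp add: tiling_vector_def)
qed

lemma tiling_vector_iterate:
  assumes "\<And>j. k < j \<Longrightarrow> layer j = W"
  shows "tiling_vector (k + 2 * n) = (transfer (card EH) ^^ n) (tiling_vector k)"
proof (induction n)
  case (Suc n)
  have "tiling_vector (k + 2 * Suc n) = tiling_vector (Suc (Suc (k + 2 * n)))"
    by simp
  also have "\<dots> = transfer (card EH) (tiling_vector (k + 2 * n))"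
    using assms by (intro tiling_vector_Suc_Suc) auto
  finally show ?case
    using Suc.IH by simp
qed simp

lemma num_tilings_prism_even:
  assumes "\<And>x. x \<notin> D"
  shows "num_tilings (cart_verts W (path_V (2 * n)) - D)
      (del_edges (cart_edges W EH (path_V (2 * n)) (path_E (2 * n))) D) =
    fst ((transfer (card EH) ^^ n) (1, 0))"
proof -
  have "layer j = W" if "0 < j" for j
    using layer_full[of j] assms that by simp
  then have "tiling_vector (0 + 2 * n) = (transfer (card EH) ^^ n) (tiling_vector 0)"
    by (intro tiling_vector_iterate) simp
  then have "fst (tiling_vector (2 * n)) = fst ((transfer (card EH) ^^ n) (1, 0))"
    by (simp add: tiling_vector_0)
  then show ?thesis
    by (simp add: num_tilings_prism tiling_vector_def)
qed

lemma num_tilings_prism_odd: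
  assumes "\<And>u j. (u, j) \<in> D \<Longrightarrow> j = 1" and "layer 1 \<in> EH"
  shows "num_tilings (cart_verts W (path_V (2 * n + 1)) - D)
      (del_edges (cart_edges W EH (path_V (2 * n + 1)) (path_E (2 * n + 1))) D) =
    fst ((transfer (card EH) ^^ n) (1, 1))"
proof -
  have "layer j = W" if "1 < j" for j
    using layer_full[of j] assms(1) that by force
  then have "tiling_vector (1 + 2 * n) = (transfer (card EH) ^^ n) (tiling_vector 1)"
    by (intro tiling_vector_iterate) simp
  then have "fst (tiling_vector (2 * n + 1)) = fst ((transfer (card EH) ^^ n) (1, 1))"
    using tiling_vector_1[OF assms(2)] by simp
  then show ?thesis
    by (simp add: num_tilings_prism tiling_vector_def)
qed

end

lemma intersecting_prism_star: "intersecting_prism star_V star_E"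
  by unfold_locales (auto simp: star_V_def star_E_def)

lemma intersecting_prism_triangle: "intersecting_prism tri_V tri_E"
  by unfold_locales (auto simp: tri_V_def tri_E_def)

lemma graph_prism_star: "graph_prism star_V star_E"
  by (rule intersecting_prism.axioms(1)[OF intersecting_prism_star])

lemma graph_prism_triangle: "graph_prism tri_V tri_E"
  by (rule intersecting_prism.axioms(1)[OF intersecting_prism_triangle])

lemma card_star_E: "card star_E = 3"
  by (simp add: star_E_def doubleton_eq_iff)

lemma card_tri_E: "card tri_E = 3"
  by (simp add: tri_E_def doubleton_eq_iff)

lemma star_minus_two_leaves:
  assumes "a \<in> {1, 2, 3}" "b \<in> {1, 2, 3}" "a \<noteq> b"
  shows "star_V - {a, b} \<in> star_E"
  using assms unfolding star_V_def star_E_def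
  by (elim insertE emptyE) (simp_all add: insert_Diff_if insert_commute)

lemma triangle_minus_vertex: "v \<in> tri_V \<Longrightarrow> tri_V - {v} \<in> tri_E"
  unfolding tri_V_def tri_E_def by (elim insertE emptyE) (simp_all add: insert_Diff_if insert_commute)

lemma del_edges_empty: "del_edges E {} = E"
  by (simp add: del_edges_def)

lemma Q_eq_transfer: "Q n = fst ((transfer 3 ^^ n) (1, 0))"
  using intersecting_prism.num_tilings_prism_even[OF intersecting_prism_star, of "{}" n]
  unfolding Q_def card_star_E del_edges_empty Diff_empty by simp

lemma T_eq_transfer: "T n = fst ((transfer 3 ^^ n) (1, 0))"
  using intersecting_prism.num_tilings_prism_even[OF intersecting_prism_triangle, of "{}" n]
  unfolding T_def card_tri_E del_edges_empty Diff_empty by simp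

lemma q_eq_transfer:
  assumes "a \<in> {1, 2, 3}" "b \<in> {1, 2, 3}" "a \<noteq> b"
  shows "q a b n = fst ((transfer 3 ^^ n) (1, 1))"
proof -
  have "{u. (u, 1) \<in> {(a, 1), (b, 1)}} = {a, b}"
    by auto
  then have layer: "graph_prism.layer star_V {(a, 1), (b, 1)} 1 \<in> star_E"
    using graph_prism.layer_one[OF graph_prism_star] star_minus_two_leaves[OF assms] by simp
  have "q a b n = fst ((transfer (card star_E) ^^ n) (1, 1))"
    unfolding q_def Let_def
    by (rule intersecting_prism.num_tilings_prism_odd[OF intersecting_prism_star _ layer]) auto
  then show ?thesis
    by (simp add: card_star_E)
qed

lemma t_eq_transfer:
  assumes "v \<in> tri_V"
  shows "t v n = fst ((transfer 3 ^^ n) (1, 1))"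
proof -
  have "{u. (u, 1) \<in> {(v, 1)}} = {v}"
    by auto
  then have layer: "graph_prism.layer tri_V {(v, 1)} 1 \<in> tri_E"
    using graph_prism.layer_one[OF graph_prism_triangle] triangle_minus_vertex[OF assms] by simp
  have "t v n = fst ((transfer (card tri_E) ^^ n) (1, 1))"
    unfolding t_def Let_def
    by (rule intersecting_prism.num_tilings_prism_odd[OF intersecting_prism_triangle _ layer]) auto
  then show ?thesis
    by (simp add: card_tri_E)
qed

theorem theorem9:
  shows "(\<forall>n\<ge>1. Q n = T n) \<and>
         (\<forall>a\<in>{1,2,3}. \<forall>b\<in>{1,2,3}. \<forall>v\<in>tri_V. a \<noteq> b \<longrightarrow> (\<forall>n. q a b n = t v n))"
proof (intro conjI allI impI ballI)
  show "Q n = T n" for n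
    unfolding Q_eq_transfer T_eq_transfer ..
next
  fix a b v n :: nat
  assume "a \<in> {1, 2, 3}" "b \<in> {1, 2, 3}" "v \<in> tri_V" "a \<noteq> b"
  then show "q a b n = t v n"
    using q_eq_transfer[of a b n] t_eq_transfer[of v n] by presburger
qed

end
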